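(* Consider a radial three-phase distribution grid on buses $\{0,\ldots,N\}$ (feeder bus $0$, each bus $n\geq1$ with parent $\pi_n<n$, line $n$ joining $\pi_n$ and $n$), with symmetric phase impedance matrices $\mathbf{Z}_n=\mathbf{Z}_n^{\top}\in\mathbb{C}^{3\times3}$, and let $\mathbf{X}:=2\mathbf{M}\,\mathrm{bdiag}(\{\mathrm{Im}[\tilde{\mathbf{Z}}_n]\})\mathbf{M}^{\top}\in\mathbb{R}^{3N\times3N}$, assumed invertible. Let $\mathbf{U}\mathbf{\Lambda}\mathbf{U}^{\top}$ be an eigenvalue decomposition of $\mathbf{X}\mathbf{X}^{\top}$ ($\mathbf{U}$ orthogonal, $\mathbf{\Lambda}$ diagonal with positive entries). If \[\mu\in\left(0,\ \lambda_{\min}\!\left(\mathbf{\Lambda}^{-1/2}\mathbf{U}^{\top}(\mathbf{X}+\mathbf{X}^{\top})\mathbf{U}\mathbf{\Lambda}^{-1/2}\right)\right),\] then $\|\mathbf{I}-\mu\mathbf{X}\|_2<1$.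
   Context: $\tilde{\mathbf{Z}}_n:=\operatorname{diag}(\boldsymbol{\alpha}^* )\mathbf{Z}_n\operatorname{diag}(\boldsymbol{\alpha})$ with $\boldsymbol{\alpha}:=[1~\alpha~\alpha^2]^{\top}$, $\alpha=e^{-j2\pi/3}$; $^*$ is entrywise conjugation and $\mathrm{Im}$ is entrywise. $\mathbf{M}:=\mathbf{T}(\mathbf{I}_3\otimes\mathbf{F})\mathbf{T}^{\top}$, where: the full branch-bus incidence matrix $\tilde{\mathbf{A}}=[\mathbf{a}_0~\mathbf{A}]\in\mathbb{R}^{N\times(N+1)}$ has in row $n$ entry $+1$ at column $\pi_n$, $-1$ at column $n$, zeros elsewhere; $\mathbf{A}$ is the reduced incidence matrix (column of bus $0$ removed); $\mathbf{F}:=-\mathbf{A}^{-1}$; $\mathbf{T}:=[\mathbf{I}_3\otimes\mathbf{e}_1^{\top};\ldots;\mathbf{I}_3\otimes\mathbf{e}_N^{\top}]$ (blocks stacked vertically) with $\mathbf{e}_n$ the $n$-th column of $\mathbf{I}_N$. $\mathrm{bdiag}$ denotes a block diagonal matrix. $\|\cdot\|_2$ is the spectral norm; $\lambda_{\min}$ is the smallest eigenvalue of a symmetric matrix. *)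

theory Defs
  imports "Jordan_Normal_Form.Matrix" "Jordan_Normal_Form.Char_Poly" Complex_Main
begin

(* Matrices are 0-indexed: row i of the incidence matrices is line i+1,
   column j of the full incidence matrix is bus j, of the reduced one bus j+1. *)

definition full_incidence :: "nat \<Rightarrow> (nat \<Rightarrow> nat) \<Rightarrow> real mat" where
  "full_incidence N par = mat N (N+1) (\<lambda>(i,j).
      if j = par (i+1) then 1 else if j = i+1 then -1 else 0)"

definition red_incidence :: "nat \<Rightarrow> (nat \<Rightarrow> nat) \<Rightarrow> real mat" where
  "red_incidence N par = mat N N (\<lambda>(i,j). full_incidence N par $$ (i, j+1))"

definition inv_mat :: "real mat \<Rightarrow> real mat" where
  "inv_mat A = (THE B. B \<in> carrier_mat (dim_row A) (dim_row A) \<and>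
                 A * B = 1\<^sub>m (dim_row A) \<and> B * A = 1\<^sub>m (dim_row A))"

definition Fmat :: "nat \<Rightarrow> (nat \<Rightarrow> nat) \<Rightarrow> real mat" where
  "Fmat N par = - inv_mat (red_incidence N par)"

definition kron :: "'a::times mat \<Rightarrow> 'a mat \<Rightarrow> 'a mat" where
  "kron A B = mat (dim_row A * dim_row B) (dim_col A * dim_col B)
     (\<lambda>(i,j). A $$ (i div dim_row B, j div dim_col B) * B $$ (i mod dim_row B, j mod dim_col B))"

definition unit_row :: "nat \<Rightarrow> nat \<Rightarrow> real mat" where
  "unit_row N n = mat 1 N (\<lambda>(i,j). if j = n - 1 then 1 else 0)"

(* T = [I3 (x) e_1^T; ... ; I3 (x) e_N^T], blocks stacked vertically *)
definition Tmat :: "nat \<Rightarrow> real mat" where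
  "Tmat N = mat (3*N) (3*N) (\<lambda>(i,j). kron (1\<^sub>m 3) (unit_row N (i div 3 + 1)) $$ (i mod 3, j))"

definition Mmat :: "nat \<Rightarrow> (nat \<Rightarrow> nat) \<Rightarrow> real mat" where
  "Mmat N par = Tmat N * kron (1\<^sub>m 3) (Fmat N par) * transpose_mat (Tmat N)"

definition alpha :: complex where "alpha = cis (- 2 * pi / 3)"

definition alpha_vec :: "nat \<Rightarrow> complex" where "alpha_vec k = alpha ^ k"

definition Ztilde :: "complex mat \<Rightarrow> complex mat" where
  "Ztilde Z = mat_diag 3 (\<lambda>k. cnj (alpha_vec k)) * Z * mat_diag 3 alpha_vec"

definition bdiag_ImZ :: "nat \<Rightarrow> (nat \<Rightarrow> complex mat) \<Rightarrow> real mat" where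
  "bdiag_ImZ N Z = mat (3*N) (3*N) (\<lambda>(i,j).
     if i div 3 = j div 3 then Im (Ztilde (Z (i div 3 + 1)) $$ (i mod 3, j mod 3)) else 0)"

definition Xmat :: "nat \<Rightarrow> (nat \<Rightarrow> nat) \<Rightarrow> (nat \<Rightarrow> complex mat) \<Rightarrow> real mat" where
  "Xmat N par Z = 2 \<cdot>\<^sub>m (Mmat N par * bdiag_ImZ N Z * transpose_mat (Mmat N par))"

definition vnorm :: "real vec \<Rightarrow> real" where "vnorm x = sqrt (x \<bullet> x)"

definition spec_norm :: "real mat \<Rightarrow> real" where
  "spec_norm A = Sup {vnorm (A *\<^sub>v x) | x. x \<in> carrier_vec (dim_col A) \<and> vnorm x = 1}"

definition lambda_min :: "real mat \<Rightarrow> real" where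
  "lambda_min A = Min {k. eigenvalue A k}"

end

theory Submission
  imports Defs
begin

text \<open>Let \<open>S = D U\<^sup>T (X + X\<^sup>T) U D\<close> with \<open>D = \<Lambda>^(-1/2)\<close>, and \<open>m = \<lambda>_min(S)\<close>.
  Because \<open>X X\<^sup>T = U \<Lambda> U\<^sup>T\<close>, the substitution \<open>y = U D z\<close> turns \<open>|z|^2\<close> into \<open>|X\<^sup>T y|^2\<close>
  and \<open>z\<^sup>T S z\<close> into \<open>y\<^sup>T (X + X\<^sup>T) y\<close>; hence \<open>m |X\<^sup>T y|^2 \<le> 2 y\<^sup>T X y\<close> for all \<open>y\<close>, which for
  \<open>y = X^(-T) X x\<close> reads \<open>m |X x|^2 \<le> 2 x\<^sup>T X x\<close>. Expanding,
  \<open>|(I - \<mu> X) x|^2 \<le> |x|^2 - \<mu> (m - \<mu>) |X x|^2\<close>, and \<open>|X x|\<close> is bounded below by a multiple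
  of \<open>|x|\<close> since \<open>X\<close> is invertible.
  That \<open>\<lambda>_min\<close> of a symmetric matrix bounds its Rayleigh quotient from below is shown
  variationally: the infimum \<open>r\<close> of the quotient is an eigenvalue, for otherwise the positive
  semidefinite \<open>S - r I\<close> would be invertible, hence coercive, contradicting minimality of \<open>r\<close>.
  The grid structure enters only through \<open>X\<close> being square and invertible.\<close>

lemma nonneg_quadratic_discriminant:
  fixes a b c :: real
  assumes a: "0 \<le> a" and c: "0 \<le> c" and q: "\<And>t. 0 \<le> a + 2*b*t + c*t^2"
  shows "b^2 \<le> a*c"
proof (cases "c = 0")
  case True
  show ?thesis
  proof (rule ccontr)
    assume "\<not> ?thesis"
    hence b: "b \<noteq> 0" using True by auto
    have "0 \<le> a + 2*b*(-(a+1)/(2*b)) + c*(-(a+1)/(2*b))^2" by (rule q)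
    also have "\<dots> = -1" using True b by (simp add: field_simps)
    finally show False by simp
  qed
next
  case False
  hence cp: "c > 0" using c by auto
  have "0 \<le> a + 2*b*(-b/c) + c*(-b/c)^2" by (rule q)
  also have "\<dots> = a - b^2/c" using cp by (simp add: field_simps power2_eq_square)
  finally have "b^2/c \<le> a" by simp
  thus ?thesis using cp by (simp add: field_simps mult.commute)
qed

lemma scalar_prod_self_nonneg: "0 \<le> (v::real vec) \<bullet> v"
  unfolding scalar_prod_def by (auto intro: sum_nonneg)

lemma scalar_prod_self_pos:
  assumes "(v::real vec) \<in> carrier_vec n" "v \<noteq> 0\<^sub>v n"
  shows "0 < v \<bullet> v"
proof (rule ccontr)
  assume "\<not> 0 < v \<bullet> v"
  hence "\<forall>i\<in>{0..<n}. v $ i * v $ i = 0"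
    using assms(1) scalar_prod_self_nonneg[of v]
    by (subst sum_nonneg_eq_0_iff[symmetric]) (auto simp: scalar_prod_def)
  thus False using assms by (auto intro!: eq_vecI)
qed

lemma smult_mat_mult_vec:
  fixes A :: "real mat"
  assumes "dim_vec v = dim_col A"
  shows "(k \<cdot>\<^sub>m A) *\<^sub>v v = k \<cdot>\<^sub>v (A *\<^sub>v v)"
  using assms by (intro eq_vecI) (auto simp: scalar_prod_def sum_distrib_left algebra_simps)

lemma psd_form_cauchy_schwarz:
  fixes B :: "real mat"
  assumes B: "B \<in> carrier_mat n n" and sym: "transpose_mat B = B"
    and psd: "\<And>v. v \<in> carrier_vec n \<Longrightarrow> 0 \<le> v \<bullet> (B *\<^sub>v v)"
    and y: "y \<in> carrier_vec n" and z: "z \<in> carrier_vec n"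
  shows "(y \<bullet> (B *\<^sub>v z))^2 \<le> (y \<bullet> (B *\<^sub>v y)) * (z \<bullet> (B *\<^sub>v z))"
proof (rule nonneg_quadratic_discriminant[OF psd[OF y] psd[OF z]])
  fix t :: real
  have swap: "z \<bullet> (B *\<^sub>v y) = y \<bullet> (B *\<^sub>v z)"
    using transpose_vec_mult_scalar[OF B y z] comm_scalar_prod[OF y, of "B *\<^sub>v z"] sym B z by simp
  have "0 \<le> (y + t \<cdot>\<^sub>v z) \<bullet> (B *\<^sub>v (y + t \<cdot>\<^sub>v z))" using psd y z by simp
  also have "B *\<^sub>v (y + t \<cdot>\<^sub>v z) = B *\<^sub>v y + t \<cdot>\<^sub>v (B *\<^sub>v z)"
    using B y z by (simp add: mult_add_distrib_mat_vec mult_mat_vec)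
  also have "(y + t \<cdot>\<^sub>v z) \<bullet> (B *\<^sub>v y + t \<cdot>\<^sub>v (B *\<^sub>v z)) =
      y \<bullet> (B *\<^sub>v y) + 2 * (y \<bullet> (B *\<^sub>v z)) * t + (z \<bullet> (B *\<^sub>v z)) * t^2"
    using B y z swap
    by (simp add: add_scalar_prod_distrib[of _ n] scalar_prod_add_distrib[of _ n] power2_eq_square algebra_simps)
  finally show "0 \<le> y \<bullet> (B *\<^sub>v y) + 2 * (y \<bullet> (B *\<^sub>v z)) * t + (z \<bullet> (B *\<^sub>v z)) * t^2" .
qed

lemma scalar_prod_cauchy_schwarz:
  fixes y z :: "real vec"
  assumes "y \<in> carrier_vec n" "z \<in> carrier_vec n"
  shows "(y \<bullet> z)^2 \<le> (y \<bullet> y) * (z \<bullet> z)"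
  using psd_form_cauchy_schwarz[of "1\<^sub>m n" n y z] assms scalar_prod_self_nonneg by simp

lemma mult_mat_vec_norm_bound:
  fixes A :: "real mat"
  assumes A: "A \<in> carrier_mat nr nc"
  shows "\<exists>K>0. \<forall>v\<in>carrier_vec nc. (A *\<^sub>v v) \<bullet> (A *\<^sub>v v) \<le> K * (v \<bullet> v)"
proof -
  define K where "K = 1 + (\<Sum>i<nr. row A i \<bullet> row A i)"
  have "0 < K" unfolding K_def by (smt (verit) scalar_prod_self_nonneg sum_nonneg)
  moreover have "(A *\<^sub>v v) \<bullet> (A *\<^sub>v v) \<le> K * (v \<bullet> v)" if v: "v \<in> carrier_vec nc" for v
  proof -
    have "(A *\<^sub>v v) \<bullet> (A *\<^sub>v v) = (\<Sum>i<nr. (row A i \<bullet> v)^2)"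
      using A v by (simp add: scalar_prod_def power2_eq_square lessThan_atLeast0)
    also have "\<dots> \<le> (\<Sum>i<nr. (row A i \<bullet> row A i) * (v \<bullet> v))"
      by (intro sum_mono scalar_prod_cauchy_schwarz[of _ nc]) (use A v in auto)
    also have "\<dots> \<le> K * (v \<bullet> v)"
      unfolding K_def using scalar_prod_self_nonneg[of v] by (simp add: sum_distrib_left sum_distrib_right algebra_simps)
    finally show ?thesis .
  qed
  ultimately show ?thesis by blast
qed

lemma quadratic_form_abs_bound:
  fixes A :: "real mat"
  assumes A: "A \<in> carrier_mat n n"
  shows "\<exists>K>0. \<forall>v\<in>carrier_vec n. \<bar>v \<bullet> (A *\<^sub>v v)\<bar> \<le> K * (v \<bullet> v)"
proof -
  obtain K where K: "0 < K" "\<And>v. v \<in> carrier_vec n \<Longrightarrow> (A *\<^sub>v v) \<bullet> (A *\<^sub>v v) \<le> K * (v \<bullet> v)"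
    using mult_mat_vec_norm_bound[OF A] by blast
  have "\<bar>v \<bullet> (A *\<^sub>v v)\<bar> \<le> sqrt K * (v \<bullet> v)" if v: "v \<in> carrier_vec n" for v
  proof -
    have "(v \<bullet> (A *\<^sub>v v))^2 \<le> (v \<bullet> v) * ((A *\<^sub>v v) \<bullet> (A *\<^sub>v v))"
      using scalar_prod_cauchy_schwarz[OF v mult_mat_vec_carrier[OF A v]] .
    also have "\<dots> \<le> (v \<bullet> v) * (K * (v \<bullet> v))"
      using K(2)[OF v] scalar_prod_self_nonneg[of v] by (intro mult_left_mono) auto
    also have "\<dots> = (sqrt K * (v \<bullet> v))^2" using K(1) by (simp add: power2_eq_square)
    finally show ?thesis
      using abs_le_square_iff[of _ "sqrt K * (v \<bullet> v)"] scalar_prod_self_nonneg[of v] K(1) by simp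
  qed
  thus ?thesis using K(1) by (intro exI[of _ "sqrt K"]) auto
qed

lemma psd_invertible_coercive:
  fixes B :: "real mat"
  assumes B: "B \<in> carrier_mat n n" and sym: "transpose_mat B = B"
    and psd: "\<And>v. v \<in> carrier_vec n \<Longrightarrow> 0 \<le> v \<bullet> (B *\<^sub>v v)"
    and det: "det B \<noteq> 0"
  shows "\<exists>\<delta>>0. \<forall>z\<in>carrier_vec n. \<delta> * (z \<bullet> z) \<le> z \<bullet> (B *\<^sub>v z)"
proof -
  obtain Bi where Bi: "Bi \<in> carrier_mat n n" "Bi * B = 1\<^sub>m n"
    using det_non_zero_imp_unit[OF B det] unfolding Units_def ring_mat_def by auto
  obtain KB where KB: "0 < KB" "\<And>v. v \<in> carrier_vec n \<Longrightarrow> \<bar>v \<bullet> (B *\<^sub>v v)\<bar> \<le> KB * (v \<bullet> v)"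
    using quadratic_form_abs_bound[OF B] by blast
  obtain Ki where Ki: "0 < Ki" "\<And>v. v \<in> carrier_vec n \<Longrightarrow> (Bi *\<^sub>v v) \<bullet> (Bi *\<^sub>v v) \<le> Ki * (v \<bullet> v)"
    using mult_mat_vec_norm_bound[OF Bi(1)] by blast
  have "z \<bullet> z \<le> Ki * KB * (z \<bullet> (B *\<^sub>v z))" if z: "z \<in> carrier_vec n" for z
  proof -
    define y where "y = B *\<^sub>v z"
    have y: "y \<in> carrier_vec n" unfolding y_def using B z by auto
    have "(y \<bullet> y)^2 \<le> (y \<bullet> (B *\<^sub>v y)) * (z \<bullet> (B *\<^sub>v z))"
      using psd_form_cauchy_schwarz[OF B sym psd y z] unfolding y_def by simp
    also have "\<dots> \<le> (KB * (y \<bullet> y)) * (z \<bullet> (B *\<^sub>v z))"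
      using KB(2)[OF y] psd[OF z] by (intro mult_right_mono) auto
    finally have "y \<bullet> y \<le> KB * (z \<bullet> (B *\<^sub>v z))"
      using scalar_prod_self_nonneg[of y] psd[OF z] KB(1)
      by (cases "y \<bullet> y = 0") (auto simp: power2_eq_square)
    moreover have "z \<bullet> z \<le> Ki * (y \<bullet> y)"
      using Ki(2)[OF y] Bi B z unfolding y_def by (simp flip: assoc_mult_mat_vec[of Bi n n B n z])
    ultimately show ?thesis using Ki(1) by (smt (verit) mult_left_mono mult.assoc)
  qed
  hence "\<forall>z\<in>carrier_vec n. 1 / (Ki * KB) * (z \<bullet> z) \<le> z \<bullet> (B *\<^sub>v z)"
    using Ki(1) KB(1) by (simp add: field_simps)
  thus ?thesis using Ki(1) KB(1) by (intro exI[of _ "1 / (Ki * KB)"]) auto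
qed

definition rayleigh_inf :: "real mat \<Rightarrow> nat \<Rightarrow> real" where
  "rayleigh_inf S n = Inf {(z \<bullet> (S *\<^sub>v z)) / (z \<bullet> z) | z. z \<in> carrier_vec n \<and> z \<noteq> 0\<^sub>v n}"

lemma le_rayleigh_inf_iff:
  fixes S :: "real mat"
  assumes S: "S \<in> carrier_mat n n" and n: "0 < n"
  shows "c \<le> rayleigh_inf S n \<longleftrightarrow> (\<forall>z\<in>carrier_vec n. c * (z \<bullet> z) \<le> z \<bullet> (S *\<^sub>v z))"
proof -
  define Q where "Q = {(z \<bullet> (S *\<^sub>v z)) / (z \<bullet> z) | z. z \<in> carrier_vec n \<and> z \<noteq> 0\<^sub>v n}"
  have "unit_vec n 0 \<in> carrier_vec n" "unit_vec n 0 \<noteq> 0\<^sub>v n"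
    using n by (auto simp: unit_vec_def zero_vec_def vec_eq_iff)
  hence Q_ne: "Q \<noteq> {}" unfolding Q_def by blast
  obtain K where K: "\<And>v. v \<in> carrier_vec n \<Longrightarrow> \<bar>v \<bullet> (S *\<^sub>v v)\<bar> \<le> K * (v \<bullet> v)"
    using quadratic_form_abs_bound[OF S] by blast
  have Q_bdd: "bdd_below Q"
  proof (rule bdd_belowI[of _ "- K"])
    fix q assume "q \<in> Q"
    then obtain z where z: "z \<in> carrier_vec n" "z \<noteq> 0\<^sub>v n" and q: "q = (z \<bullet> (S *\<^sub>v z)) / (z \<bullet> z)"
      unfolding Q_def by blast
    have "- K * (z \<bullet> z) \<le> z \<bullet> (S *\<^sub>v z)" using K[OF z(1)] by linarith
    thus "- K \<le> q" unfolding q using scalar_prod_self_pos[OF z] by (simp add: field_simps)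
  qed
  have "c \<le> Inf Q \<longleftrightarrow> (\<forall>z\<in>carrier_vec n. z \<noteq> 0\<^sub>v n \<longrightarrow> c \<le> (z \<bullet> (S *\<^sub>v z)) / (z \<bullet> z))"
    unfolding le_cInf_iff[OF Q_ne Q_bdd] unfolding Q_def by blast
  also have "\<dots> \<longleftrightarrow> (\<forall>z\<in>carrier_vec n. c * (z \<bullet> z) \<le> z \<bullet> (S *\<^sub>v z))"
  proof (intro ball_cong refl)
    fix z :: "real vec" assume z: "z \<in> carrier_vec n"
    show "(z \<noteq> 0\<^sub>v n \<longrightarrow> c \<le> (z \<bullet> (S *\<^sub>v z)) / (z \<bullet> z)) \<longleftrightarrow> c * (z \<bullet> z) \<le> z \<bullet> (S *\<^sub>v z)"
      using scalar_prod_self_pos[OF z] S by (cases "z = 0\<^sub>v n") (auto simp: field_simps)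
  qed
  finally show ?thesis unfolding rayleigh_inf_def Q_def .
qed

lemma rayleigh_inf_eigenvalue:
  fixes S :: "real mat"
  assumes S: "S \<in> carrier_mat n n" and sym: "transpose_mat S = S" and n: "0 < n"
  shows "eigenvalue S (rayleigh_inf S n)"
proof -
  define m where "m = rayleigh_inf S n"
  define B where "B = char_matrix S m"
  have B: "B \<in> carrier_mat n n" unfolding B_def using S by simp
  have B_form: "v \<bullet> (B *\<^sub>v v) = v \<bullet> (S *\<^sub>v v) - m * (v \<bullet> v)" if v: "v \<in> carrier_vec n" for v
    unfolding B_def char_matrix_def using S v
    by (simp add: add_mult_distrib_mat_vec[of _ n n] scalar_prod_add_distrib[of _ n] smult_mat_mult_vec)
  have B_sym: "transpose_mat B = B"
    unfolding B_def char_matrix_def using S sym by (intro eq_matI) (auto simp: transpose_add[of _ n n])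
  have "det B = 0"
  proof (rule ccontr)
    assume "det B \<noteq> 0"
    moreover have "0 \<le> v \<bullet> (B *\<^sub>v v)" if "v \<in> carrier_vec n" for v
      using B_form[OF that] le_rayleigh_inf_iff[OF S n, of m] that unfolding m_def by simp
    ultimately obtain \<delta> where "0 < \<delta>" "\<forall>z\<in>carrier_vec n. \<delta> * (z \<bullet> z) \<le> z \<bullet> (B *\<^sub>v z)"
      using psd_invertible_coercive[OF B B_sym] by blast
    hence "m + \<delta> \<le> rayleigh_inf S n" "0 < \<delta>"
      using le_rayleigh_inf_iff[OF S n, of "m + \<delta>"] B_form by (auto simp: algebra_simps)
    thus False unfolding m_def by simp
  qed
  thus ?thesis using eigenvalue_det[OF S] unfolding B_def m_def by simp
qed

lemma lambda_min_le_eigenvalue: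
  fixes S :: "real mat"
  assumes S: "S \<in> carrier_mat n n" and e: "eigenvalue S m"
  shows "lambda_min S \<le> m"
proof -
  have "char_poly S \<noteq> 0" using degree_monic_char_poly[OF S] by auto
  hence "finite {k. poly (char_poly S) k = 0}" by (rule poly_roots_finite)
  hence "finite {k. eigenvalue S k}" using eigenvalue_root_char_poly[OF S] by simp
  thus ?thesis unfolding lambda_min_def using e by (intro Min_le) auto
qed

lemma lambda_min_le_quadratic_form:
  fixes S :: "real mat"
  assumes S: "S \<in> carrier_mat n n" and sym: "transpose_mat S = S" and z: "z \<in> carrier_vec n"
  shows "lambda_min S * (z \<bullet> z) \<le> z \<bullet> (S *\<^sub>v z)"
proof (cases "n = 0")
  case True
  thus ?thesis using S z by (simp add: scalar_prod_def)
next
  case False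
  hence n: "0 < n" by simp
  have "lambda_min S * (z \<bullet> z) \<le> rayleigh_inf S n * (z \<bullet> z)"
    using lambda_min_le_eigenvalue[OF S rayleigh_inf_eigenvalue[OF S sym n]] scalar_prod_self_nonneg[of z]
    by (rule mult_right_mono)
  also have "\<dots> \<le> z \<bullet> (S *\<^sub>v z)" using le_rayleigh_inf_iff[OF S n] z by blast
  finally show ?thesis .
qed

lemma quadratic_form_congruence:
  fixes P Y :: "real mat"
  assumes P: "P \<in> carrier_mat n k" and Y: "Y \<in> carrier_mat n n" and v: "v \<in> carrier_vec k"
  shows "v \<bullet> ((transpose_mat P * Y * P) *\<^sub>v v) = (P *\<^sub>v v) \<bullet> (Y *\<^sub>v (P *\<^sub>v v))"
proof -
  have "(transpose_mat P * Y * P) *\<^sub>v v = (transpose_mat P * Y) *\<^sub>v (P *\<^sub>v v)"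
    using P Y v by (intro assoc_mult_mat_vec[of _ k n]) auto
  also have "\<dots> = transpose_mat P *\<^sub>v (Y *\<^sub>v (P *\<^sub>v v))"
    using P Y v by (intro assoc_mult_mat_vec[of _ k n]) auto
  finally have "(transpose_mat P * Y * P) *\<^sub>v v = transpose_mat P *\<^sub>v (Y *\<^sub>v (P *\<^sub>v v))" .
  thus ?thesis
    using transpose_vec_mult_scalar[OF P v, of "Y *\<^sub>v (P *\<^sub>v v)"] comm_scalar_prod[OF v]
      comm_scalar_prod[of "Y *\<^sub>v (P *\<^sub>v v)" n "P *\<^sub>v v"] P Y v
    by simp
qed

lemma lambda_min_congruence_bound:
  fixes P Y :: "real mat"
  assumes P: "P \<in> carrier_mat n n" and Y: "Y \<in> carrier_mat n n" and sym: "transpose_mat Y = Y"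
    and z: "z \<in> carrier_vec n"
  shows "lambda_min (transpose_mat P * Y * P) * (z \<bullet> z) \<le> (P *\<^sub>v z) \<bullet> (Y *\<^sub>v (P *\<^sub>v z))"
proof -
  have "transpose_mat (transpose_mat P * Y * P) = transpose_mat P * transpose_mat (transpose_mat P * Y)"
    using transpose_mult[of "transpose_mat P * Y" n n P n] P Y by simp
  also have "\<dots> = transpose_mat P * Y * P"
    using transpose_mult[of "transpose_mat P" n n Y n] P Y sym
    by (simp add: assoc_mult_mat[of _ n n _ n _ n])
  finally have "transpose_mat (transpose_mat P * Y * P) = transpose_mat P * Y * P" .
  hence "lambda_min (transpose_mat P * Y * P) * (z \<bullet> z) \<le> z \<bullet> ((transpose_mat P * Y * P) *\<^sub>v z)"
    using P Y z by (intro lambda_min_le_quadratic_form[of _ n]) auto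
  thus ?thesis using quadratic_form_congruence[OF P Y z] by simp
qed

lemma eigendecomposition_quadratic_bound:
  fixes X U :: "real mat" and lam :: "nat \<Rightarrow> real" and n :: nat
  defines "D \<equiv> mat_diag n (\<lambda>i. 1 / sqrt (lam i))"
  assumes X: "X \<in> carrier_mat n n" and U: "U \<in> carrier_mat n n"
    and U_orth: "U * transpose_mat U = 1\<^sub>m n"
    and lam_pos: "\<forall>i<n. 0 < lam i"
    and eig: "X * transpose_mat X = U * mat_diag n lam * transpose_mat U"
    and y: "y \<in> carrier_vec n"
  shows "lambda_min (D * transpose_mat U * (X + transpose_mat X) * U * D)
           * ((transpose_mat X *\<^sub>v y) \<bullet> (transpose_mat X *\<^sub>v y))
         \<le> y \<bullet> ((X + transpose_mat X) *\<^sub>v y)"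
proof -
  define E where "E = mat_diag n (\<lambda>i. sqrt (lam i))"
  define Y where "Y = X + transpose_mat X"
  define P where "P = U * D"
  define z where "z = (E * transpose_mat U) *\<^sub>v y"
  have D: "D \<in> carrier_mat n n" and E: "E \<in> carrier_mat n n" and Y: "Y \<in> carrier_mat n n"
    and Ut: "transpose_mat U \<in> carrier_mat n n" and P: "P \<in> carrier_mat n n"
    unfolding D_def E_def Y_def P_def using X U by auto
  have z: "z \<in> carrier_vec n" unfolding z_def using E Ut y by auto
  have D_sym: "transpose_mat D = D" and E_sym: "transpose_mat E = E"
    unfolding D_def E_def by (auto intro!: eq_matI simp: mat_diag_def)
  have Y_sym: "transpose_mat Y = Y"
    unfolding Y_def using X by (simp add: transpose_add[of _ n n] comm_add_mat[of _ n n])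
  have "D * E = mat_diag n (\<lambda>i. 1 / sqrt (lam i) * sqrt (lam i))"
    and "E * E = mat_diag n (\<lambda>i. sqrt (lam i) * sqrt (lam i))"
    unfolding D_def E_def by simp_all
  hence DE: "D * E = 1\<^sub>m n" and EE: "E * E = mat_diag n lam"
    using lam_pos by (auto intro!: eq_matI simp: mat_diag_def)
  have S_eq: "D * transpose_mat U * Y * U * D = transpose_mat P * Y * P"
    unfolding P_def using D U Y D_sym by (simp add: transpose_mult[of _ n n] assoc_mult_mat[of _ n n _ n _ n])
  have "P * (E * transpose_mat U) = U * (D * E) * transpose_mat U"
    unfolding P_def using U D E Ut by (simp add: assoc_mult_mat[of _ n n _ n _ n])
  hence PEU: "P * (E * transpose_mat U) = 1\<^sub>m n" using DE U_orth U by simp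
  have "P *\<^sub>v z = (P * (E * transpose_mat U)) *\<^sub>v y"
    unfolding z_def by (rule assoc_mult_mat_vec[symmetric]) (use P E Ut y in auto)
  hence Pz: "P *\<^sub>v z = y" using PEU y by simp
  have "transpose_mat (E * transpose_mat U) * 1\<^sub>m n * (E * transpose_mat U) = U * (E * E) * transpose_mat U"
    using E U E_sym by (simp add: transpose_mult[of _ n n] assoc_mult_mat[of _ n n _ n _ n])
  also have "\<dots> = transpose_mat (transpose_mat X) * 1\<^sub>m n * transpose_mat X"
    using EE eig X by simp
  finally have zz: "z \<bullet> z = (transpose_mat X *\<^sub>v y) \<bullet> (transpose_mat X *\<^sub>v y)"
    using quadratic_form_congruence[of "E * transpose_mat U" n n "1\<^sub>m n" y]
      quadratic_form_congruence[of "transpose_mat X" n n "1\<^sub>m n" y] E Ut X y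
    unfolding z_def by simp
  show ?thesis
    using lambda_min_congruence_bound[OF P Y Y_sym z] S_eq Pz zz unfolding Y_def by simp
qed

lemma invertible_mat_left_inverse:
  fixes A :: "real mat"
  assumes A: "A \<in> carrier_mat n n" and inv: "invertible_mat A"
  obtains B where "B \<in> carrier_mat n n" "B * A = 1\<^sub>m n"
proof -
  from inv obtain B where AB: "A * B = 1\<^sub>m n" and BA: "B * A = 1\<^sub>m (dim_row B)"
    unfolding invertible_mat_def inverts_mat_def using A by auto
  have "dim_col B = n" using AB by (metis index_mult_mat(3) index_one_mat(3))
  moreover have "dim_row B = n" using BA A by (metis carrier_matD(2) index_mult_mat(3) index_one_mat(3))
  ultimately show ?thesis using that BA by auto
qed

lemma invertible_mat_norm_lower_bound:
  fixes A :: "real mat"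
  assumes A: "A \<in> carrier_mat n n" and inv: "invertible_mat A"
  shows "\<exists>K>0. \<forall>x\<in>carrier_vec n. x \<bullet> x \<le> K * ((A *\<^sub>v x) \<bullet> (A *\<^sub>v x))"
proof -
  obtain B where B: "B \<in> carrier_mat n n" "B * A = 1\<^sub>m n"
    using invertible_mat_left_inverse[OF A inv] .
  obtain K where K: "0 < K" "\<And>v. v \<in> carrier_vec n \<Longrightarrow> (B *\<^sub>v v) \<bullet> (B *\<^sub>v v) \<le> K * (v \<bullet> v)"
    using mult_mat_vec_norm_bound[OF B(1)] by blast
  have "x = B *\<^sub>v (A *\<^sub>v x)" if "x \<in> carrier_vec n" for x
    using B A that by (simp flip: assoc_mult_mat_vec[of B n n A n x])
  thus ?thesis using K A by (metis mult_mat_vec_carrier)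
qed

lemma coercive_of_transpose_coercive:
  fixes X :: "real mat"
  assumes X: "X \<in> carrier_mat n n" and inv: "invertible_mat X"
    and coercive: "\<And>y. y \<in> carrier_vec n \<Longrightarrow>
      m * ((transpose_mat X *\<^sub>v y) \<bullet> (transpose_mat X *\<^sub>v y)) \<le> y \<bullet> ((X + transpose_mat X) *\<^sub>v y)"
    and x: "x \<in> carrier_vec n"
  shows "m * ((X *\<^sub>v x) \<bullet> (X *\<^sub>v x)) \<le> 2 * (x \<bullet> (X *\<^sub>v x))"
proof -
  obtain B where B: "B \<in> carrier_mat n n" "B * X = 1\<^sub>m n"
    using invertible_mat_left_inverse[OF X inv] .
  define u where "u = X *\<^sub>v x"
  define y where "y = transpose_mat B *\<^sub>v u"
  have u: "u \<in> carrier_vec n" and y: "y \<in> carrier_vec n" unfolding u_def y_def using X B x by auto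
  have Bu: "B *\<^sub>v u = x" unfolding u_def using B X x by (simp flip: assoc_mult_mat_vec[of B n n X n x])
  have "transpose_mat X * transpose_mat B = 1\<^sub>m n"
    using B X by (metis transpose_mult transpose_one)
  hence Xty: "transpose_mat X *\<^sub>v y = u"
    unfolding y_def using X B u by (simp flip: assoc_mult_mat_vec[of "transpose_mat X" n n _ n u])
  have uy: "u \<bullet> y = x \<bullet> u"
    using transpose_vec_mult_scalar[OF B(1) u u] comm_scalar_prod[OF u, of "transpose_mat B *\<^sub>v u"]
      comm_scalar_prod[OF u x] Bu B u unfolding y_def by simp
  have "y \<bullet> ((X + transpose_mat X) *\<^sub>v y) = (transpose_mat X *\<^sub>v y) \<bullet> y + y \<bullet> (transpose_mat X *\<^sub>v y)"
    using transpose_vec_mult_scalar[OF X y y] X y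
    by (simp add: add_mult_distrib_mat_vec[of _ n n] scalar_prod_add_distrib[of _ n])
  also have "\<dots> = 2 * (x \<bullet> u)" using Xty uy comm_scalar_prod[OF u y] by simp
  finally show ?thesis using coercive[OF y] Xty unfolding u_def by simp
qed

lemma one_minus_smult_contraction_bound:
  fixes X :: "real mat"
  assumes X: "X \<in> carrier_mat n n" and x: "x \<in> carrier_vec n"
    and coercive: "m * ((X *\<^sub>v x) \<bullet> (X *\<^sub>v x)) \<le> 2 * (x \<bullet> (X *\<^sub>v x))"
    and lower: "x \<bullet> x \<le> K * ((X *\<^sub>v x) \<bullet> (X *\<^sub>v x))"
    and K: "0 < K" and mu: "0 < \<mu>" "\<mu> \<le> m"
  shows "((1\<^sub>m n - \<mu> \<cdot>\<^sub>m X) *\<^sub>v x) \<bullet> ((1\<^sub>m n - \<mu> \<cdot>\<^sub>m X) *\<^sub>v x)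
         \<le> (1 - \<mu> * (m - \<mu>) / K) * (x \<bullet> x)"
proof -
  define u where "u = X *\<^sub>v x"
  have u: "u \<in> carrier_vec n" unfolding u_def using X x by auto
  have "(1\<^sub>m n - \<mu> \<cdot>\<^sub>m X) *\<^sub>v x = x - \<mu> \<cdot>\<^sub>v u"
    unfolding u_def using X x by (simp add: minus_mult_distrib_mat_vec[of _ n n] smult_mat_mult_vec)
  hence "((1\<^sub>m n - \<mu> \<cdot>\<^sub>m X) *\<^sub>v x) \<bullet> ((1\<^sub>m n - \<mu> \<cdot>\<^sub>m X) *\<^sub>v x)
      = x \<bullet> x - 2 * \<mu> * (x \<bullet> u) + \<mu>^2 * (u \<bullet> u)"
    using x u comm_scalar_prod[OF u x]
    by (simp add: minus_scalar_prod_distrib[of _ n] scalar_prod_minus_distrib[of _ n]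
        power2_eq_square algebra_simps)
  also have "\<dots> \<le> x \<bullet> x - \<mu> * (m - \<mu>) * (u \<bullet> u)"
    using coercive mu unfolding u_def by (simp add: algebra_simps power2_eq_square)
  also have "\<mu> * (m - \<mu>) / K * (x \<bullet> x) \<le> \<mu> * (m - \<mu>) * (u \<bullet> u)"
    using mult_left_mono[OF lower, of "\<mu> * (m - \<mu>) / K"] K mu unfolding u_def by simp
  hence "x \<bullet> x - \<mu> * (m - \<mu>) * (u \<bullet> u) \<le> (1 - \<mu> * (m - \<mu>) / K) * (x \<bullet> x)"
    by (simp add: algebra_simps)
  finally show ?thesis .
qed

lemma spec_norm_le:
  fixes A :: "real mat"
  assumes A: "A \<in> carrier_mat k n" and n: "0 < n" and c: "0 \<le> c"
    and bound: "\<And>x. x \<in> carrier_vec n \<Longrightarrow> (A *\<^sub>v x) \<bullet> (A *\<^sub>v x) \<le> c^2 * (x \<bullet> x)"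
  shows "spec_norm A \<le> c"
  unfolding spec_norm_def
proof (rule cSup_least)
  have "unit_vec n 0 \<in> carrier_vec n" "vnorm (unit_vec n 0) = 1"
    using n by (auto simp: vnorm_def)
  thus "{vnorm (A *\<^sub>v x) | x. x \<in> carrier_vec (dim_col A) \<and> vnorm x = 1} \<noteq> {}"
    using A by blast
next
  fix r assume "r \<in> {vnorm (A *\<^sub>v x) | x. x \<in> carrier_vec (dim_col A) \<and> vnorm x = 1}"
  then obtain x where x: "x \<in> carrier_vec n" "x \<bullet> x = 1" and r: "r = vnorm (A *\<^sub>v x)"
    using A by (auto simp: vnorm_def)
  have "(A *\<^sub>v x) \<bullet> (A *\<^sub>v x) \<le> c^2" using bound[OF x(1)] x(2) by simp
  thus "r \<le> c" unfolding r vnorm_def using c real_sqrt_le_iff[of _ "c^2"] by simp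
qed

lemma spec_norm_one_minus_smult_less_one:
  fixes X :: "real mat"
  assumes n: "0 < n" and X: "X \<in> carrier_mat n n" and inv: "invertible_mat X"
    and mu: "0 < \<mu>" "\<mu> < m"
    and coercive: "\<And>y. y \<in> carrier_vec n \<Longrightarrow>
      m * ((transpose_mat X *\<^sub>v y) \<bullet> (transpose_mat X *\<^sub>v y)) \<le> y \<bullet> ((X + transpose_mat X) *\<^sub>v y)"
  shows "spec_norm (1\<^sub>m n - \<mu> \<cdot>\<^sub>m X) < 1"
proof -
  obtain K where K: "0 < K" "\<forall>x\<in>carrier_vec n. x \<bullet> x \<le> K * ((X *\<^sub>v x) \<bullet> (X *\<^sub>v x))"
    using invertible_mat_norm_lower_bound[OF X inv] by blast
  define c where "c = sqrt (max 0 (1 - \<mu> * (m - \<mu>) / K))"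
  have "spec_norm (1\<^sub>m n - \<mu> \<cdot>\<^sub>m X) \<le> c"
  proof (rule spec_norm_le[of _ n n])
    fix x :: "real vec" assume x: "x \<in> carrier_vec n"
    have "((1\<^sub>m n - \<mu> \<cdot>\<^sub>m X) *\<^sub>v x) \<bullet> ((1\<^sub>m n - \<mu> \<cdot>\<^sub>m X) *\<^sub>v x) \<le> (1 - \<mu> * (m - \<mu>) / K) * (x \<bullet> x)"
      using one_minus_smult_contraction_bound[OF X x coercive_of_transpose_coercive[OF X inv coercive x]]
        K x mu by simp
    also have "\<dots> \<le> c^2 * (x \<bullet> x)"
      unfolding c_def using scalar_prod_self_nonneg[of x] by (intro mult_right_mono) auto
    finally show "((1\<^sub>m n - \<mu> \<cdot>\<^sub>m X) *\<^sub>v x) \<bullet> ((1\<^sub>m n - \<mu> \<cdot>\<^sub>m X) *\<^sub>v x) \<le> c^2 * (x \<bullet> x)" .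
  qed (use X n in \<open>auto simp: c_def\<close>)
  also have "c < 1" unfolding c_def using K(1) mu by (auto simp: max_def)
  finally show ?thesis .
qed

theorem proposition6:
  fixes N :: nat and par :: "nat \<Rightarrow> nat" and Z :: "nat \<Rightarrow> complex mat"
    and U :: "real mat" and lam :: "nat \<Rightarrow> real" and \<mu> :: real
  assumes N: "N \<ge> 1"
    and parent: "\<forall>n \<in> {1..N}. par n < n"
    and Zdim: "\<forall>n \<in> {1..N}. Z n \<in> carrier_mat 3 3"
    and Zsym: "\<forall>n \<in> {1..N}. transpose_mat (Z n) = Z n"
    and Xinv: "invertible_mat (Xmat N par Z)"
    and Udim: "U \<in> carrier_mat (3*N) (3*N)"
    and Uorth: "transpose_mat U * U = 1\<^sub>m (3*N)" "U * transpose_mat U = 1\<^sub>m (3*N)"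
    and lampos: "\<forall>i < 3*N. lam i > 0"
    and eig: "Xmat N par Z * transpose_mat (Xmat N par Z) = U * mat_diag (3*N) lam * transpose_mat U"
    and mu_pos: "0 < \<mu>"
    and mu_lt: "\<mu> < lambda_min (mat_diag (3*N) (\<lambda>i. 1 / sqrt (lam i)) * transpose_mat U
                  * (Xmat N par Z + transpose_mat (Xmat N par Z)) * U
                  * mat_diag (3*N) (\<lambda>i. 1 / sqrt (lam i)))"
  shows "spec_norm (1\<^sub>m (3*N) - \<mu> \<cdot>\<^sub>m Xmat N par Z) < 1"
proof -
  have "dim_row (Tmat N) = 3*N" unfolding Tmat_def by (simp only: dim_row_mat)
  hence "dim_row (Xmat N par Z) = 3*N"
    unfolding Xmat_def Mmat_def by (simp only: index_smult_mat index_mult_mat)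
  moreover have "dim_col (Xmat N par Z) = dim_row (Xmat N par Z)"
    using Xinv unfolding invertible_mat_def by (simp only: square_mat.simps)
  ultimately have X: "Xmat N par Z \<in> carrier_mat (3*N) (3*N)" by auto
  show ?thesis
    using N eigendecomposition_quadratic_bound[OF X Udim Uorth(2) lampos eig]
    by (intro spec_norm_one_minus_smult_less_one[OF _ X Xinv mu_pos mu_lt]) auto
qed

end
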